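(* Let $N\ge7$, $D=\frac{N-2}2$, let $1\le L\le N-1$ be an integer and $J=4L$. Let $q_0\in(0,\infty)$ be the unique number with $q_0^{-2D}+(q_0^2+1)^{-D}=1$. For $k\in\{1,\dots,L\}$ set $\iota_{4k-3}=\iota_{4k-2}=+1$, $\iota_{4k-1}=\iota_{4k}=-1$ and $z^*_{4k-3}=\frac12e_1+\frac{q_0}2e_{k+1}$, $z^*_{4k-2}=-\frac12e_1+\frac{q_0}2e_{k+1}$, $z^*_{4k-1}=\frac12e_1-\frac{q_0}2e_{k+1}$, $z^*_{4k}=-\frac12e_1-\frac{q_0}2e_{k+1}$, where $e_1,\dots,e_N$ is the standard basis of $\mathbb{R}^N$. Then this configuration is degenerate and $A^*$ has at least $L$ linearly independent kernel elements in $[0,\infty)^J$.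
   Context: $A^*_{ij}=\mathbf 1_{i\ne j}\kappa_0\kappa_\infty\frac{\iota_i\iota_j}{|z_i^*-z_j^*|^{N-2}}$ with fixed positive constants $\kappa_0,\kappa_\infty$. A configuration is degenerate if $A^*$ has a nonzero kernel element in $[0,\infty)^J$. *)

theory Defs
  imports Complex_Main
begin

(* Points of R^N are represented as functions nat => real, coordinates 1..N.
   Vectors of R^J are functions nat => real, entries 1..J. *)

definition D :: "nat \<Rightarrow> real" where
  "D N = (real N - 2) / 2"

definition q0 :: "nat \<Rightarrow> real" where
  "q0 N = (THE q. q > 0 \<and> q powr (- 2 * D N) + (q\<^sup>2 + 1) powr (- D N) = 1)"

definition std_basis :: "nat \<Rightarrow> nat \<Rightarrow> real" ("e") where
  "e i = (\<lambda>m. if m = i then 1 else 0)"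

definition edist :: "nat \<Rightarrow> (nat \<Rightarrow> real) \<Rightarrow> (nat \<Rightarrow> real) \<Rightarrow> real" where
  "edist N x y = sqrt (\<Sum>m = 1..N. (x m - y m)\<^sup>2)"

definition Astar :: "nat \<Rightarrow> real \<Rightarrow> real \<Rightarrow> (nat \<Rightarrow> real) \<Rightarrow> (nat \<Rightarrow> nat \<Rightarrow> real)
    \<Rightarrow> nat \<Rightarrow> nat \<Rightarrow> real" where
  "Astar N k0 kinf \<iota> z i j =
     (if i \<noteq> j then k0 * kinf * (\<iota> i * \<iota> j) / (edist N (z i) (z j)) ^ (N - 2) else 0)"

definition nonneg_kernel :: "nat \<Rightarrow> (nat \<Rightarrow> nat \<Rightarrow> real) \<Rightarrow> (nat \<Rightarrow> real) \<Rightarrow> bool" where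
  "nonneg_kernel J A v \<longleftrightarrow>
     (\<forall>j\<in>{1..J}. 0 \<le> v j) \<and> (\<forall>i\<in>{1..J}. (\<Sum>j = 1..J. A i j * v j) = 0)"

definition degenerate :: "nat \<Rightarrow> (nat \<Rightarrow> nat \<Rightarrow> real) \<Rightarrow> bool" where
  "degenerate J A \<longleftrightarrow> (\<exists>v. nonneg_kernel J A v \<and> (\<exists>j\<in>{1..J}. v j \<noteq> 0))"

definition lin_indep_family :: "nat \<Rightarrow> nat \<Rightarrow> (nat \<Rightarrow> nat \<Rightarrow> real) \<Rightarrow> bool" where
  "lin_indep_family J L v \<longleftrightarrow>
     (\<forall>c :: nat \<Rightarrow> real. (\<forall>j\<in>{1..J}. (\<Sum>l = 1..L. c l * v l j) = 0) \<longrightarrow> (\<forall>l\<in>{1..L}. c l = 0))"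

end

theory Submission
  imports Defs
begin

(* The configuration consists of L rectangles with sides 1 and q0, the k-th one lying in the
   plane spanned by e1 and e(k+1), with charge +1 at the two corners on the side e(k+1) > 0
   and -1 at the other two. Fix a row i. The corners of a rectangle other than that of z_i form
   two pairs of opposite charges at equal distance from z_i, so their contributions cancel.
   Within its own rectangle z_i sees the same charge at distance 1 and opposite charges at
   distances q0 and sqrt (1 + q0^2); the resulting sum 1 - q0^(2-N) - (1 + q0^2)^((2-N)/2)
   vanishes by the equation defining q0. So the indicator vector of every rectangle lies in
   the kernel of A*, and these L disjointly supported vectors are linearly independent. *)

lemma ex1_balance_root:
  fixes a :: real
  assumes "a \<ge> 1/2"
  shows "\<exists>!q. q > 0 \<and> q powr (- 2 * a) + (q\<^sup>2 + 1) powr (- a) = 1"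
proof -
  define f where "f q = q powr (- 2 * a) + (q\<^sup>2 + 1) powr (- a)" for q :: real
  have f_strict_antimono: "f y < f x" if "0 < x" "x < y" for x y
  proof -
    have "y powr (-2*a) < x powr (-2*a)" using that assms by (intro powr_less_mono2_neg) auto
    moreover have "(y\<^sup>2+1) powr (-a) < (x\<^sup>2+1) powr (-a)" using that assms
      by (intro powr_less_mono2_neg) (auto intro: power_strict_mono add_pos_nonneg)
    ultimately show ?thesis unfolding f_def by simp
  qed
  have "f 1 \<ge> 1" unfolding f_def by simp
  moreover have "f 2 \<le> 1"
  proof -
    have "(2::real) powr (-2*a) \<le> 2 powr (-1)" using assms by (intro powr_mono) auto
    moreover have "(5::real) powr (-a) \<le> 5 powr (-1/2)" using assms by (intro powr_mono) auto
    moreover have "(5::real) powr (-1/2) \<le> 1/2"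
      using real_sqrt_le_mono[of 4 5] by (simp add: powr_minus powr_half_sqrt divide_simps)
    moreover have "f 2 = 2 powr (-2*a) + 5 powr (-a)" unfolding f_def by simp
    moreover have "(2::real) powr (-1) = 1/2" by (simp add: powr_minus_divide)
    ultimately show ?thesis by linarith
  qed
  moreover have "isCont f x" if "1 \<le> x" for x
  proof -
    have "0 < x\<^sup>2 + 1" by (intro add_nonneg_pos) simp_all
    then show ?thesis unfolding f_def using that by (intro continuous_intros) auto
  qed
  ultimately obtain x where "1 \<le> x" "f x = 1"
    using IVT2[of f 2 1 1] by auto
  then have "\<exists>!q. q > 0 \<and> f q = 1"
  proof (intro ex1I[of _ x])
    show "x > 0 \<and> f x = 1" using \<open>1 \<le> x\<close> \<open>f x = 1\<close> by simp
  next
    fix y assume "y > 0 \<and> f y = 1"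
    then show "y = x"
      using f_strict_antimono[of x y] f_strict_antimono[of y x] \<open>1 \<le> x\<close> \<open>f x = 1\<close>
      by (cases x y rule: linorder_cases) auto
  qed
  then show ?thesis unfolding f_def .
qed

lemma powr_neg_half_of_nat:
  fixes x :: real
  assumes "x > 0"
  shows "x powr (- (real n / 2)) = 1 / sqrt x ^ n"
proof -
  have "sqrt x ^ n = (x powr (1/2)) ^ n" using assms by (simp add: powr_half_sqrt)
  also have "\<dots> = x powr (real n / 2)" using assms by (simp add: powr_power mult.commute)
  finally show ?thesis by (simp only: powr_minus_divide)
qed

lemma q0_pos_balance:
  assumes "N \<ge> 3"
  shows "q0 N > 0" and "1 / q0 N ^ (N - 2) + 1 / sqrt ((q0 N)\<^sup>2 + 1) ^ (N - 2) = 1"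
proof -
  have D: "D N = real (N - 2) / 2" using assms unfolding D_def by (simp add: of_nat_diff)
  have "D N \<ge> 1/2" using D assms by simp
  from theI'[OF ex1_balance_root[OF this]]
  have q: "q0 N > 0" "q0 N powr (- 2 * D N) + ((q0 N)\<^sup>2 + 1) powr (- D N) = 1"
    unfolding q0_def by auto
  show "q0 N > 0" by (fact q(1))
  have "q0 N powr (- 2 * D N) = inverse (q0 N powr real (N - 2))"
    unfolding D by (simp add: powr_minus)
  also have "\<dots> = 1 / q0 N ^ (N - 2)"
    using q(1) by (simp add: powr_realpow divide_inverse)
  finally have "q0 N powr (- 2 * D N) = 1 / q0 N ^ (N - 2)" .
  moreover have "((q0 N)\<^sup>2 + 1) powr (- D N) = 1 / sqrt ((q0 N)\<^sup>2 + 1) ^ (N - 2)"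
    unfolding D by (rule powr_neg_half_of_nat) (simp add: add_nonneg_pos)
  ultimately show "1 / q0 N ^ (N - 2) + 1 / sqrt ((q0 N)\<^sup>2 + 1) ^ (N - 2) = 1"
    using q(2) by simp
qed

definition plane_point :: "real \<Rightarrow> real \<Rightarrow> nat \<Rightarrow> nat \<Rightarrow> real" where
  "plane_point a b k = (\<lambda>m. a * e 1 m + b * e (k + 1) m)"

lemma edist_plane_point:
  assumes "k \<in> {1..N - 1}" "l \<in> {1..N - 1}"
  shows "edist N (plane_point a b k) (plane_point a' b' l) =
    sqrt ((a - a')\<^sup>2 + (if k = l then (b - b')\<^sup>2 else b\<^sup>2 + b'\<^sup>2))"
proof -
  have kl: "1 \<le> k" "k + 1 \<le> N" "1 \<le> l" "l + 1 \<le> N" using assms by auto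
  have "(plane_point a b k m - plane_point a' b' l m)\<^sup>2 =
      (if m = 1 then (a - a')\<^sup>2 else 0)
      + (if m = k + 1 then (if k = l then (b - b')\<^sup>2 else b\<^sup>2) else 0)
      + (if m = l + 1 \<and> k \<noteq> l then b'\<^sup>2 else 0)" for m
    using kl unfolding plane_point_def std_basis_def
    by (auto simp: power2_eq_square algebra_simps)
  then have "(\<Sum>m = 1..N. (plane_point a b k m - plane_point a' b' l m)\<^sup>2) =
      (a - a')\<^sup>2 + (if k = l then (b - b')\<^sup>2 else b\<^sup>2) + (if k \<noteq> l then b'\<^sup>2 else 0)"
    using kl by (simp add: sum.distrib sum.delta)
  then show ?thesis unfolding edist_def by simp
qed

(* For q = q0 N and r < 4, corner q k r is the point z*_(4k-3+r), and corner_charge r its charge. *)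
definition corner_x :: "nat \<Rightarrow> real" where
  "corner_x r = (if even r then 1/2 else -1/2)"

definition corner_y :: "real \<Rightarrow> nat \<Rightarrow> real" where
  "corner_y q r = (if r < 2 then q/2 else -q/2)"

definition corner_charge :: "nat \<Rightarrow> real" where
  "corner_charge r = (if r < 2 then 1 else -1)"

definition corner :: "real \<Rightarrow> nat \<Rightarrow> nat \<Rightarrow> nat \<Rightarrow> real" where
  "corner q k r = plane_point (corner_x r) (corner_y q r) k"

lemma sum_lessThan_4:
  fixes g :: "nat \<Rightarrow> 'a :: comm_monoid_add"
  shows "(\<Sum>r<4. g r) = g 0 + g 1 + g 2 + g 3"
  by (simp add: numeral_eq_Suc add.assoc)

lemma own_rectangle_row_sum:
  fixes q :: real
  assumes "q > 0" "1 / q ^ n + 1 / sqrt (q\<^sup>2 + 1) ^ n = 1" "r < 4"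
  shows "(\<Sum>r'<4. if r' = r then 0 else corner_charge r * corner_charge r' /
      sqrt ((corner_x r - corner_x r')\<^sup>2 + (corner_y q r - corner_y q r')\<^sup>2) ^ n) = 0"
proof -
  have "r = 0 \<or> r = 1 \<or> r = 2 \<or> r = 3" using assms(3) by auto
  then show ?thesis
    using assms unfolding sum_lessThan_4
    by (auto simp: corner_x_def corner_y_def corner_charge_def power2_eq_square add.commute)
qed

lemma other_rectangle_row_sum:
  "(\<Sum>r'<4. corner_charge r * corner_charge r' /
      sqrt ((corner_x r - corner_x r')\<^sup>2 + (corner_y q r)\<^sup>2 + (corner_y q r')\<^sup>2) ^ n) = 0"
  unfolding sum_lessThan_4
  by (simp add: corner_x_def corner_y_def corner_charge_def power2_eq_square)

definition block_indicator :: "nat \<Rightarrow> nat \<Rightarrow> real" where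
  "block_indicator l j = (if j \<in> {4 * l - 3..4 * l} then 1 else 0)"

lemma block_index_cases:
  fixes i L :: nat
  assumes "i \<in> {1..4 * L}"
  obtains k r where "k \<in> {1..L}" "r < 4" "i = 4 * k - 3 + r"
proof
  show "(i + 3) div 4 \<in> {1..L}" "(i + 3) mod 4 < 4" using assms by auto
  show "i = 4 * ((i + 3) div 4) - 3 + (i + 3) mod 4"
    using assms unfolding atLeastAtMost_iff by presburger
qed

lemma block_index_eq_iff:
  fixes k l r r' :: nat
  assumes "k \<ge> 1" "l \<ge> 1" "r < 4" "r' < 4"
  shows "4 * k - 3 + r = 4 * l - 3 + r' \<longleftrightarrow> k = l \<and> r = r'"
  using assms by presburger

lemma sum_block_indicator:
  assumes "l \<in> {1..L}"
  shows "(\<Sum>j = 1..4 * L. f j * block_indicator l j) = (\<Sum>r<4. f (4 * l - 3 + r))"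
proof -
  have "(\<Sum>j = 1..4 * L. f j * block_indicator l j) =
      (\<Sum>j = 1..4 * L. if j \<in> {4 * l - 3..4 * l} then f j else 0)"
    by (rule sum.cong) (simp_all add: block_indicator_def)
  also have "\<dots> = (\<Sum>j \<in> {1..4 * L} \<inter> {4 * l - 3..4 * l}. f j)"
    by (simp only: sum.inter_restrict finite_atLeastAtMost)
  also have "{1..4 * L} \<inter> {4 * l - 3..4 * l} = {0 + (4 * l - 3)..<4 + (4 * l - 3)}"
    using assms by auto
  also have "sum f \<dots> = (\<Sum>r<4. f (4 * l - 3 + r))"
    by (subst sum.shift_bounds_nat_ivl) (simp add: atLeast0LessThan add.commute)
  finally show ?thesis .
qed

lemma block_indicator_in_kernel:
  assumes "l \<in> {1..L}" and "\<And>i. i \<in> {1..4 * L} \<Longrightarrow> (\<Sum>r<4. A i (4 * l - 3 + r)) = 0"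
  shows "nonneg_kernel (4 * L) A (block_indicator l)"
  using assms sum_block_indicator[OF assms(1), of "A _"]
  by (simp add: nonneg_kernel_def block_indicator_def)

lemma lin_indep_block_indicators: "lin_indep_family (4 * L) L block_indicator"
  unfolding lin_indep_family_def
proof (intro allI impI ballI)
  fix c :: "nat \<Rightarrow> real" and l
  assume vanish: "\<forall>j\<in>{1..4 * L}. (\<Sum>l = 1..L. c l * block_indicator l j) = 0"
    and l: "l \<in> {1..L}"
  have "(\<Sum>l' = 1..L. c l' * block_indicator l' (4 * l - 3)) =
      (\<Sum>l' = 1..L. if l' = l then c l' else 0)"
    using l by (intro sum.cong) (auto simp: block_indicator_def)
  also have "\<dots> = c l" using l by simp
  finally have "(\<Sum>l' = 1..L. c l' * block_indicator l' (4 * l - 3)) = c l" .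
  moreover have "4 * l - 3 \<in> {1..4 * L}" using l by auto
  ultimately show "c l = 0" using vanish by auto
qed

lemma corner_row_sum:
  fixes q :: real
  assumes "q > 0" "1 / q ^ n + 1 / sqrt (q\<^sup>2 + 1) ^ n = 1"
    and "k \<in> {1..N - 1}" "l \<in> {1..N - 1}" "r < 4"
  shows "(\<Sum>r'<4. if l = k \<and> r' = r then 0
      else corner_charge r * corner_charge r' / edist N (corner q k r) (corner q l r') ^ n) = 0"
proof (cases "l = k")
  case True
  have edist_corners: "edist N (corner q k r) (corner q k r') =
      sqrt ((corner_x r - corner_x r')\<^sup>2 + (corner_y q r - corner_y q r')\<^sup>2)" for r'
    unfolding corner_def using edist_plane_point[OF assms(3,3)] by simp
  show ?thesis
    unfolding True edist_corners using own_rectangle_row_sum[OF assms(1,2,5)] by simp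
next
  case False
  then show ?thesis
    using other_rectangle_row_sum[of r q n] edist_plane_point[OF assms(3,4)]
    by (simp add: corner_def add.assoc)
qed

lemma corners_of_configuration:
  assumes "\<forall>k\<in>{1..L}. \<iota> (4*k-3) = 1 \<and> \<iota> (4*k-2) = 1 \<and> \<iota> (4*k-1) = -1 \<and> \<iota> (4*k) = -1"
    and "\<forall>k\<in>{1..L}.
           z (4*k-3) = (\<lambda>m. (1/2) * e 1 m + (q / 2) * e (k+1) m) \<and>
           z (4*k-2) = (\<lambda>m. -(1/2) * e 1 m + (q / 2) * e (k+1) m) \<and>
           z (4*k-1) = (\<lambda>m. (1/2) * e 1 m - (q / 2) * e (k+1) m) \<and>
           z (4*k)   = (\<lambda>m. -(1/2) * e 1 m - (q / 2) * e (k+1) m)"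
    and "k \<in> {1..L}" "r < 4"
  shows "z (4 * k - 3 + r) = corner q k r \<and> \<iota> (4 * k - 3 + r) = corner_charge r"
proof -
  have "4 * k - 3 + 1 = 4 * k - 2" "4 * k - 3 + 2 = 4 * k - 1" "4 * k - 3 + 3 = 4 * k"
    using assms(3) by auto
  moreover have "r = 0 \<or> r = 1 \<or> r = 2 \<or> r = 3" using assms(4) by auto
  ultimately show ?thesis
    using assms(1,2)[rule_format, OF assms(3)]
    by (auto simp: corner_def plane_point_def corner_x_def corner_y_def corner_charge_def fun_eq_iff)
qed

lemma Astar_block_entry:
  assumes "\<And>k r. k \<in> {1..L} \<Longrightarrow> r < 4 \<Longrightarrow>
      z (4 * k - 3 + r) = corner q k r \<and> \<iota> (4 * k - 3 + r) = corner_charge r"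
    and "k \<in> {1..L}" "l \<in> {1..L}" "r < 4" "r' < 4"
  shows "Astar N k0 kinf \<iota> z (4 * k - 3 + r) (4 * l - 3 + r') = k0 * kinf *
    (if l = k \<and> r' = r then 0
     else corner_charge r * corner_charge r' / edist N (corner q k r) (corner q l r') ^ (N - 2))"
  using assms block_index_eq_iff[of k l r r'] by (auto simp: Astar_def)

theorem lemma4p10:
  fixes N L J :: nat and k0 kinf :: real
    and \<iota> :: "nat \<Rightarrow> real" and z :: "nat \<Rightarrow> nat \<Rightarrow> real"
  assumes "N \<ge> 7" and "1 \<le> L" and "L \<le> N - 1" and "J = 4 * L"
    and "k0 > 0" and "kinf > 0"
    and "\<forall>k\<in>{1..L}. \<iota> (4*k-3) = 1 \<and> \<iota> (4*k-2) = 1 \<and> \<iota> (4*k-1) = -1 \<and> \<iota> (4*k) = -1"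
    and "\<forall>k\<in>{1..L}.
           z (4*k-3) = (\<lambda>m. (1/2) * e 1 m + (q0 N / 2) * e (k+1) m) \<and>
           z (4*k-2) = (\<lambda>m. -(1/2) * e 1 m + (q0 N / 2) * e (k+1) m) \<and>
           z (4*k-1) = (\<lambda>m. (1/2) * e 1 m - (q0 N / 2) * e (k+1) m) \<and>
           z (4*k)   = (\<lambda>m. -(1/2) * e 1 m - (q0 N / 2) * e (k+1) m)"
  shows "degenerate J (Astar N k0 kinf \<iota> z) \<and>
         (\<exists>v :: nat \<Rightarrow> nat \<Rightarrow> real.
            (\<forall>l\<in>{1..L}. nonneg_kernel J (Astar N k0 kinf \<iota> z) (v l)) \<and>
            lin_indep_family J L v)"
proof -
  define q where "q = q0 N"
  define A where "A = Astar N k0 kinf \<iota> z"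
  have q: "q > 0" "1 / q ^ (N - 2) + 1 / sqrt (q\<^sup>2 + 1) ^ (N - 2) = 1"
    using q0_pos_balance assms(1) unfolding q_def by auto
  note corners = corners_of_configuration[OF assms(7) assms(8)[folded q_def]]
  have row: "(\<Sum>r'<4. A i (4 * l - 3 + r')) = 0"
    if i: "i \<in> {1..4 * L}" and l: "l \<in> {1..L}" for i l
  proof -
    obtain k r where kr: "k \<in> {1..L}" "r < 4" "i = 4 * k - 3 + r"
      using block_index_cases[OF i] .
    have kl: "k \<in> {1..N - 1}" "l \<in> {1..N - 1}" using kr(1) l assms(3) by auto
    show ?thesis
      using Astar_block_entry[OF corners kr(1) l kr(2)] corner_row_sum[OF q kl kr(2)]
      unfolding A_def kr(3) by (simp add: sum_distrib_left[symmetric])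
  qed
  have kernel: "nonneg_kernel J A (block_indicator l)" if "l \<in> {1..L}" for l
    using block_indicator_in_kernel[OF that row[OF _ that]] assms(4) by simp
  have "degenerate J A"
    unfolding degenerate_def using kernel[of 1] assms(2,4)
    by (intro exI[of _ "block_indicator 1"] conjI bexI[of _ 1]) (auto simp: block_indicator_def)
  then show ?thesis
    using kernel lin_indep_block_indicators[of L] assms(4) unfolding A_def
    by (intro conjI exI[of _ block_indicator]) auto
qed

end
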